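(* Let $p,q\ge1$ and $d=p+q$. Assume that $f$ belongs to a finite-dimensional vector subspace $V\subseteq C(\mathbb{R}^d)$ such that $\tau_h(V)\subseteq V$ for all $h\in\mathbb{R}^d$ and $O_A(V)\subseteq V$ for all $A\in\mathbf{O}(p,q)$. Then $f$ is an ordinary polynomial in $d$ real variables.
   Context: $\mathbf{O}(p,q)=\{A\in\mathrm{GL}(d,\mathbb{R}): A^TI_{p,q}A=I_{p,q}\}$, where $I_{p,q}$ is the block-diagonal matrix $\mathrm{diag}(I_p,-I_q)$ (the isometry group of the quadratic form $\sum_{k=1}^px_k^2-\sum_{k=1}^qy_k^2$). For $g\in C(\mathbb{R}^d)$: $\tau_hg(x)=g(x+h)$, $O_Ag(x)=g(Ax)$. *)

theory Defs
  imports "HOL-Analysis.Analysis"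
begin

text \<open>R^d with d = p + q is modelled as real ^ ('p + 'q), where 'p and 'q are
  finite (nonempty) index types with CARD('p) = p, CARD('q) = q.
  The first p coordinates are the Inl-indices, the last q the Inr-indices.\<close>

definition Ipq :: "real ^ ('p::finite + 'q::finite) ^ ('p + 'q)" where
  "Ipq = (\<chi> i j. if i = j then (case i of Inl _ \<Rightarrow> 1 | Inr _ \<Rightarrow> -1) else 0)"

definition indef_orth_group :: "(real ^ ('p::finite + 'q::finite) ^ ('p + 'q)) set" where
  "indef_orth_group = {A. invertible A \<and> transpose A ** Ipq ** A = Ipq}"

definition translate :: "'a::plus \<Rightarrow> ('a \<Rightarrow> 'b) \<Rightarrow> ('a \<Rightarrow> 'b)" where
  "translate h g = (\<lambda>x. g (x + h))"

definition compose_lin :: "real ^ 'n ^ 'n \<Rightarrow> (real ^ 'n::finite \<Rightarrow> 'b) \<Rightarrow> (real ^ 'n \<Rightarrow> 'b)" where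
  "compose_lin A g = (\<lambda>x. g (A *v x))"

definition cont_subspace :: "('a::topological_space \<Rightarrow> complex) set \<Rightarrow> bool" where
  "cont_subspace V \<longleftrightarrow> (\<forall>g\<in>V. continuous_on UNIV g) \<and> (\<lambda>x. 0) \<in> V \<and>
     (\<forall>g\<in>V. \<forall>h\<in>V. (\<lambda>x. g x + h x) \<in> V) \<and> (\<forall>c. \<forall>g\<in>V. (\<lambda>x. c * g x) \<in> V)"

definition fin_dim_fun :: "('a \<Rightarrow> complex) set \<Rightarrow> bool" where
  "fin_dim_fun V \<longleftrightarrow> (\<exists>B. finite B \<and> B \<subseteq> V \<and>
       V = {(\<lambda>x. \<Sum>b\<in>B. c b * b x) | c. True})"

definition is_polynomial_fun :: "(real ^ 'n::finite \<Rightarrow> complex) \<Rightarrow> bool" where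
  "is_polynomial_fun f \<longleftrightarrow> (\<exists>E :: ('n \<Rightarrow> nat) set. \<exists>c. finite E \<and>
       (\<forall>x. f x = (\<Sum>\<alpha>\<in>E. c \<alpha> * (\<Prod>i\<in>UNIV. complex_of_real ((x $ i) ^ \<alpha> i)))))"

end

theory Submission
  imports
    Defs
    "HOL-Library.Function_Algebras"
    "HOL-Computational_Algebra.Fundamental_Theorem_Algebra"
begin

text \<open>Let \<open>v = e\<^sub>a \<plusminus> e\<^sub>b\<close> be a null vector, \<open>e\<^sub>a\<close> a positive and \<open>e\<^sub>b\<close> a negative basis
  vector. A hyperbolic rotation in \<open>O(p,q)\<close> maps \<open>c v\<close> to \<open>v\<close> for any \<open>c > 0\<close>, so every
  eigenvalue of the translation \<open>\<tau>\<^sub>v\<close> on \<open>V\<close> is an eigenvalue of \<open>\<tau>\<^sub>c\<^sub>v\<close>. As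
  \<open>\<tau>\<^sub>v = (\<tau>\<^sub>v\<^sub>/\<^sub>m)\<^sup>m\<close>, the finite set of these eigenvalues contains an \<open>m\<close>-th root of each of
  its elements for every \<open>m\<close>, which forces it to be \<open>{1}\<close>. Hence \<open>\<tau>\<^sub>v - 1\<close> is nilpotent on
  \<open>V\<close>, and Newton's forward difference formula, valid first at integers, then at rationals and
  by continuity everywhere, shows that each \<open>g \<in> V\<close> is a polynomial along null lines with
  coefficients in \<open>V\<close>. Every coordinate axis is spanned by two null vectors, so \<open>g\<close> is
  polynomial in each coordinate with coefficients in \<open>V\<close>, and induction over the coordinates
  finishes the proof.\<close>

section \<open>Polynomials in a translation operator\<close>

definition forward_diff :: "'a::real_vector \<Rightarrow> ('a \<Rightarrow> complex) \<Rightarrow> 'a \<Rightarrow> complex" where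
  "forward_diff h g = (\<lambda>x. g (x + h) - g x)"

text \<open>\<open>poly_translate v p g\<close> is \<open>p(\<tau>\<^sub>v) g\<close>, the polynomial \<open>p\<close> evaluated at the translation
  operator \<open>\<tau>\<^sub>v\<close> and applied to \<open>g\<close>.\<close>

definition poly_translate :: "'a::real_vector \<Rightarrow> complex poly \<Rightarrow> ('a \<Rightarrow> complex) \<Rightarrow> 'a \<Rightarrow> complex" where
  "poly_translate v p g = (\<lambda>x. \<Sum>k\<le>degree p. coeff p k * g (x + real k *\<^sub>R v))"

lemma poly_translate_eq_sum_atMost:
  assumes "degree p \<le> n"
  shows "poly_translate v p g x = (\<Sum>k\<le>n. coeff p k * g (x + real k *\<^sub>R v))"
  unfolding poly_translate_def
  by (rule sum.mono_neutral_left) (use assms in \<open>auto simp: coeff_eq_0\<close>)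

lemma poly_translate_0 [simp]: "poly_translate v 0 g = (\<lambda>x. 0)"
  by (simp add: poly_translate_def)

lemma poly_translate_zero_fun [simp]: "poly_translate v p (\<lambda>x. 0) = (\<lambda>x. 0)"
  by (simp add: poly_translate_def)

lemma poly_translate_pCons:
  "poly_translate v (pCons a p) g x = a * g x + poly_translate v p g (x + v)"
proof -
  have "poly_translate v (pCons a p) g x =
      (\<Sum>k\<le>Suc (degree p). coeff (pCons a p) k * g (x + real k *\<^sub>R v))"
    by (rule poly_translate_eq_sum_atMost) (rule degree_pCons_le)
  also have "\<dots> = a * g x + (\<Sum>k\<le>degree p. coeff p k * g (x + real (Suc k) *\<^sub>R v))"
    by (subst sum.atMost_Suc_shift) simp
  also have "(\<Sum>k\<le>degree p. coeff p k * g (x + real (Suc k) *\<^sub>R v)) = poly_translate v p g (x + v)"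
    unfolding poly_translate_def by (intro sum.cong refl) (simp add: algebra_simps)
  finally show ?thesis .
qed

lemma poly_translate_const: "poly_translate v [:c:] g = (\<lambda>x. c * g x)"
  by (simp add: fun_eq_iff poly_translate_pCons)

lemma poly_translate_1: "poly_translate v 1 g = g"
  by (simp add: one_pCons poly_translate_const)

lemma poly_translate_add:
  "poly_translate v (p + q) g x = poly_translate v p g x + poly_translate v q g x"
proof -
  let ?n = "max (degree p) (degree q)"
  have "poly_translate v (p + q) g x = (\<Sum>k\<le>?n. coeff (p + q) k * g (x + real k *\<^sub>R v))"
    by (rule poly_translate_eq_sum_atMost) (rule degree_add_le_max)
  also have "\<dots> = poly_translate v p g x + poly_translate v q g x"
    by (simp add: poly_translate_eq_sum_atMost[of p ?n] poly_translate_eq_sum_atMost[of q ?n]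
        sum.distrib algebra_simps)
  finally show ?thesis .
qed

lemma poly_translate_smult: "poly_translate v (smult c p) g x = c * poly_translate v p g x"
proof -
  have "poly_translate v (smult c p) g x =
      (\<Sum>k\<le>degree p. coeff (smult c p) k * g (x + real k *\<^sub>R v))"
    by (rule poly_translate_eq_sum_atMost) (rule degree_smult_le)
  then show ?thesis
    by (simp add: poly_translate_def sum_distrib_left mult.assoc)
qed

lemma poly_translate_sum: "poly_translate v (\<Sum>k\<in>K. p k) g x = (\<Sum>k\<in>K. poly_translate v (p k) g x)"
  by (induction K rule: infinite_finite_induct) (auto simp: poly_translate_add)

lemma poly_translate_mult: "poly_translate v (p * q) g = poly_translate v p (poly_translate v q g)"
proof (induction p rule: pCons_induct)
  case (pCons a p)
  show ?case
    by (simp add: fun_eq_iff poly_translate_add poly_translate_smult poly_translate_pCons pCons.IH)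
qed (simp add: fun_eq_iff)

lemma poly_translate_lincomb:
  "poly_translate v p (\<lambda>x. \<Sum>b\<in>B. c b * b x) x = (\<Sum>b\<in>B. c b * poly_translate v p b x)"
  unfolding poly_translate_def by (simp add: sum_distrib_left sum.swap[of _ B] algebra_simps)

lemma poly_translate_eigenfunction:
  assumes "\<And>x. w (x + v) = z * w x"
  shows "poly_translate v p w x = poly p z * w x"
  by (induction p arbitrary: x rule: pCons_induct)
     (simp_all add: poly_translate_pCons assms algebra_simps)

lemma poly_translate_linear: "poly_translate v [:-c, 1:] g x = g (x + v) - c * g x"
  by (simp add: poly_translate_pCons)

lemma forward_diff_eq_poly_translate: "forward_diff v g = poly_translate v [:-1, 1:] g"
  by (simp add: fun_eq_iff forward_diff_def poly_translate_linear)

lemma poly_translate_X_power: "poly_translate v ([:0, 1:] ^ k) g x = g (x + real k *\<^sub>R v)"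
  by (induction k arbitrary: x)
     (simp_all add: poly_translate_1 poly_translate_mult poly_translate_pCons algebra_simps)

lemma poly_translate_forward_diff_power:
  "poly_translate v ([:-1, 1:] ^ i) g = (forward_diff v ^^ i) g"
  by (induction i) (simp_all only: power_Suc poly_translate_1 poly_translate_mult
      forward_diff_eq_poly_translate funpow.simps o_apply id_apply power_0)

lemma forward_diff_power_zero: "(forward_diff h ^^ k) (\<lambda>x. 0) = (\<lambda>x. 0)"
  by (induction k) (auto simp: forward_diff_def)

lemma forward_diff_power_vanishes_above:
  assumes "(forward_diff h ^^ m) g = (\<lambda>x. 0)" and "m \<le> i"
  shows "(forward_diff h ^^ i) g = (\<lambda>x. 0)"
proof -
  have "(forward_diff h ^^ i) g = (forward_diff h ^^ (i - m)) ((forward_diff h ^^ m) g)"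
    using assms(2) by (metis funpow_add le_add_diff_inverse2 o_apply)
  then show ?thesis using assms(1) forward_diff_power_zero by simp
qed

lemma newton_forward_difference:
  "g (x + real k *\<^sub>R h) = (\<Sum>i\<le>k. of_nat (k choose i) * (forward_diff h ^^ i) g x)"
proof -
  have "[:0, 1:] = [:-1, 1:] + (1 :: complex poly)"
    by (simp add: one_pCons)
  then have "[:0, 1:] ^ k = (\<Sum>i\<le>k. smult (of_nat (k choose i)) ([:-1, 1:] ^ i) :: complex poly)"
    by (simp add: binomial_ring of_nat_poly)
  then show ?thesis
    by (simp add: poly_translate_X_power[symmetric] poly_translate_sum poly_translate_smult
        poly_translate_forward_diff_power)
qed

section \<open>Newton interpolation along a line\<close>

definition is_univariate_poly :: "(real \<Rightarrow> complex) \<Rightarrow> bool" where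
  "is_univariate_poly F \<longleftrightarrow> (\<exists>p. \<forall>t. F t = poly p (of_real t))"

lemma is_univariate_poly_const: "is_univariate_poly (\<lambda>t. c)"
  unfolding is_univariate_poly_def by (rule exI[of _ "[:c:]"]) simp

lemma is_univariate_poly_add:
  "is_univariate_poly F \<Longrightarrow> is_univariate_poly G \<Longrightarrow> is_univariate_poly (\<lambda>t. F t + G t)"
  unfolding is_univariate_poly_def by (metis poly_add)

lemma is_univariate_poly_mult:
  "is_univariate_poly F \<Longrightarrow> is_univariate_poly G \<Longrightarrow> is_univariate_poly (\<lambda>t. F t * G t)"
  unfolding is_univariate_poly_def by (metis poly_mult)

lemma is_univariate_poly_sum:
  "(\<And>k. k \<in> K \<Longrightarrow> is_univariate_poly (F k)) \<Longrightarrow> is_univariate_poly (\<lambda>t. \<Sum>k\<in>K. F k t)"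
  by (induction K rule: infinite_finite_induct)
     (simp_all add: is_univariate_poly_const is_univariate_poly_add)

lemma is_univariate_poly_affine:
  assumes "is_univariate_poly F"
  shows "is_univariate_poly (\<lambda>t. F (c * t + a))"
proof -
  obtain p where "\<And>t. F t = poly p (of_real t)"
    using assms unfolding is_univariate_poly_def by blast
  then have "F (c * t + a) = poly (pcompose p [:of_real a, of_real c:]) (of_real t)" for t
    by (simp add: poly_pcompose algebra_simps)
  then show ?thesis unfolding is_univariate_poly_def by blast
qed

lemma is_univariate_poly_gchoose: "is_univariate_poly (\<lambda>t. of_real (t gchoose i))"
proof -
  define p :: "complex poly" where "p = smult (inverse (fact i)) (\<Prod>j<i. [:- of_nat j, 1:])"
  have "of_real (t gchoose i) = poly p (of_real t)" for t
    by (simp add: gbinomial_prod_rev atLeast0LessThan p_def poly_prod field_simps)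
  then show ?thesis unfolding is_univariate_poly_def by blast
qed

lemma is_univariate_poly_continuous: "is_univariate_poly F \<Longrightarrow> continuous_on UNIV F"
  unfolding is_univariate_poly_def by (auto intro!: continuous_intros)

lemma is_univariate_poly_eqI:
  assumes "is_univariate_poly F" "is_univariate_poly G" "infinite S" "\<And>t. t \<in> S \<Longrightarrow> F t = G t"
  shows "F = G"
proof -
  obtain p q where p: "\<And>t. F t = poly p (of_real t)" and q: "\<And>t. G t = poly q (of_real t)"
    using assms(1,2) unfolding is_univariate_poly_def by blast
  have "of_real ` S \<subseteq> {z. poly (p - q) z = 0}"
    using assms(4) p q by auto
  moreover have "infinite (of_real ` S :: complex set)"
    using assms(3) by (metis finite_imageD inj_onI of_real_eq_iff)
  ultimately have "p = q"
    using poly_roots_finite[of "p - q"] finite_subset by auto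
  then show ?thesis using p q by (simp add: fun_eq_iff)
qed

definition newton_interpolant ::
    "nat \<Rightarrow> 'a::real_vector \<Rightarrow> ('a \<Rightarrow> complex) \<Rightarrow> 'a \<Rightarrow> real \<Rightarrow> complex" where
  "newton_interpolant m h g x t = (\<Sum>i<m. of_real (t gchoose i) * (forward_diff h ^^ i) g x)"

lemma is_univariate_poly_newton_interpolant: "is_univariate_poly (newton_interpolant m h g x)"
  unfolding newton_interpolant_def
  by (intro is_univariate_poly_sum is_univariate_poly_mult is_univariate_poly_gchoose
      is_univariate_poly_const)

lemma newton_interpolant_nat:
  assumes "(forward_diff h ^^ m) g = (\<lambda>x. 0)"
  shows "g (x + real k *\<^sub>R h) = newton_interpolant m h g x (real k)"
proof -
  have "g (x + real k *\<^sub>R h) = (\<Sum>i\<le>k + m. of_nat (k choose i) * (forward_diff h ^^ i) g x)"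
    unfolding newton_forward_difference by (rule sum.mono_neutral_left) auto
  also have "\<dots> = (\<Sum>i<m. of_nat (k choose i) * (forward_diff h ^^ i) g x)"
    by (rule sum.mono_neutral_right) (auto simp: forward_diff_power_vanishes_above[OF assms])
  also have "\<dots> = newton_interpolant m h g x (real k)"
    unfolding newton_interpolant_def
    by (intro sum.cong refl) (metis binomial_gbinomial of_real_of_nat_eq)
  finally show ?thesis .
qed

text \<open>The passages from \<open>\<nat>\<close> to \<open>\<int>\<close> and from \<open>\<int>\<close> to \<open>\<rat>\<close> compare two polynomials in \<open>t\<close> that
  agree on an infinite set: for negative integers the base point is moved back to \<open>x - n h\<close>, for
  rationals \<open>a / b\<close> the step is refined to \<open>h / b\<close>.\<close>

lemma newton_interpolant_int:
  assumes "(forward_diff h ^^ m) g = (\<lambda>x. 0)"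
  shows "g (x + of_int j *\<^sub>R h) = newton_interpolant m h g x (of_int j)"
proof -
  define n where "n = nat (- j)"
  define y where "y = x - real n *\<^sub>R h"
  have "(\<lambda>t. newton_interpolant m h g y (1 * t + real n)) = newton_interpolant m h g x"
  proof (rule is_univariate_poly_eqI[where S = "range real"])
    show "infinite (range real)"
      by (rule range_inj_infinite) (simp add: inj_on_def)
    fix t assume "t \<in> range real"
    then obtain k where "t = real k" by blast
    then show "newton_interpolant m h g y (1 * t + real n) = newton_interpolant m h g x t"
      using newton_interpolant_nat[OF assms, of y "k + n"] newton_interpolant_nat[OF assms, of x k]
      by (simp add: y_def algebra_simps)
  qed (intro is_univariate_poly_affine is_univariate_poly_newton_interpolant)+
  moreover have "x + of_int j *\<^sub>R h = y + real (nat (j + int n)) *\<^sub>R h"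
    and "of_int j + real n = real (nat (j + int n))"
    by (simp_all add: y_def n_def algebra_simps flip: scaleR_left_distrib)
  ultimately show ?thesis
    using newton_interpolant_nat[OF assms, of y "nat (j + int n)"] by (metis mult_1)
qed

lemma newton_interpolant_rat:
  assumes "\<And>s. (forward_diff (s *\<^sub>R u) ^^ m) g = (\<lambda>x. 0)" and "r \<in> \<rat>"
  shows "g (x + r *\<^sub>R u) = newton_interpolant m u g x r"
proof -
  obtain a b :: int where "b > 0" and r: "r = of_int a / of_int b"
    using Rats_cases'[OF assms(2)] by metis
  define h where "h = (1 / of_int b) *\<^sub>R u"
  have bh: "of_int (b * j) *\<^sub>R h = of_int j *\<^sub>R u" for j
    using \<open>b > 0\<close> by (simp add: h_def)
  have "(\<lambda>t. newton_interpolant m h g x (of_int b * t + 0)) = newton_interpolant m u g x"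
  proof (rule is_univariate_poly_eqI[where S = "range of_int"])
    show "infinite (range (of_int :: int \<Rightarrow> real))"
      using infinite_UNIV_int by (auto dest!: finite_imageD simp: inj_on_def)
    fix t :: real assume "t \<in> range of_int"
    then obtain j where t: "t = of_int j" by blast
    have "newton_interpolant m h g x (of_int b * t + 0) = g (x + of_int (b * j) *\<^sub>R h)"
      using newton_interpolant_int[OF assms(1)[of "1 / of_int b"], of x "b * j"]
      by (simp add: t h_def)
    also have "\<dots> = newton_interpolant m u g x t"
      using newton_interpolant_int[OF assms(1)[of 1], of x j] by (subst bh) (simp add: t)
    finally show "newton_interpolant m h g x (of_int b * t + 0) = newton_interpolant m u g x t" .
  qed (intro is_univariate_poly_affine is_univariate_poly_newton_interpolant)+
  moreover have "r *\<^sub>R u = of_int a *\<^sub>R h" and "of_int a = of_int b * r"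
    using \<open>b > 0\<close> by (simp_all add: r h_def)
  ultimately show ?thesis
    using newton_interpolant_int[OF assms(1)[of "1 / of_int b"], of x a]
    by (metis add_0_right h_def)
qed

lemma newton_interpolant_real:
  fixes g :: "'a::real_normed_vector \<Rightarrow> complex"
  assumes "continuous_on UNIV g" and "\<And>s. (forward_diff (s *\<^sub>R u) ^^ m) g = (\<lambda>x. 0)"
  shows "g (x + t *\<^sub>R u) = newton_interpolant m u g x t"
proof -
  have "continuous_on UNIV (\<lambda>t. g (x + t *\<^sub>R u))"
    by (rule continuous_on_compose2[OF assms(1)]) (auto intro!: continuous_intros)
  moreover have "continuous_on UNIV (newton_interpolant m u g x)"
    by (intro is_univariate_poly_continuous is_univariate_poly_newton_interpolant)
  ultimately have "closed {t. g (x + t *\<^sub>R u) = newton_interpolant m u g x t}"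
    by (rule closed_Collect_eq)
  moreover have "\<rat> \<subseteq> {t. g (x + t *\<^sub>R u) = newton_interpolant m u g x t}"
    using newton_interpolant_rat[OF assms(2)] by blast
  ultimately show ?thesis
    using closure_minimal Rats_closure_real by blast
qed

section \<open>Translation-invariant spaces of functions\<close>

lemma sum_fun_apply: "(\<Sum>v\<in>S. f v) x = (\<Sum>v\<in>S. f v x)"
  by (induction S rule: infinite_finite_induct) auto

lemma span_set_dependent:
  fixes B S :: "('a \<Rightarrow> complex) set"
  assumes "finite B" "finite S" "card B < card S"
    and span: "\<And>f. f \<in> S \<Longrightarrow> \<exists>c. f = (\<lambda>x. \<Sum>b\<in>B. c b * b x)"
  shows "\<exists>u. (\<exists>f\<in>S. u f \<noteq> 0) \<and> (\<forall>x. (\<Sum>f\<in>S. u f * f x) = 0)"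
proof -
  interpret fv: vector_space "\<lambda>(c::complex) (f::'a\<Rightarrow>complex). (\<lambda>x. c * f x)"
    by unfold_locales (auto simp: fun_eq_iff algebra_simps)
  have "S \<subseteq> fv.span B"
  proof
    fix f assume "f \<in> S"
    then obtain c where "f = (\<lambda>x. \<Sum>b\<in>B. c b * b x)"
      using span by blast
    then have "f = (\<Sum>b\<in>B. (\<lambda>x. c b * b x))"
      by (simp add: fun_eq_iff sum_fun_apply)
    then show "f \<in> fv.span B"
      unfolding fv.span_finite[OF assms(1)] by blast
  qed
  then have "fv.dependent S"
    using fv.independent_span_bound[OF assms(1)] assms(3) by fastforce
  then obtain u where "\<exists>f\<in>S. u f \<noteq> 0" "(\<Sum>f\<in>S. (\<lambda>x. u f * f x)) = 0"
    using fv.dependent_finite[OF assms(2)] by auto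
  moreover have "(\<Sum>f\<in>S. u f * f x) = (\<Sum>f\<in>S. (\<lambda>x. u f * f x)) x" for x
    by (rule sum_fun_apply[symmetric])
  ultimately show ?thesis by auto
qed

lemma span_family_dependent:
  fixes B :: "('a \<Rightarrow> complex) set" and \<phi> :: "nat \<Rightarrow> 'a \<Rightarrow> complex"
  assumes "finite B" and span: "\<And>k. k \<le> card B \<Longrightarrow> \<exists>c. \<phi> k = (\<lambda>x. \<Sum>b\<in>B. c b * b x)"
  shows "\<exists>c. (\<exists>k\<le>card B. c k \<noteq> 0) \<and> (\<forall>x. (\<Sum>k\<le>card B. c k * \<phi> k x) = 0)"
proof (cases "inj_on \<phi> {..card B}")
  case True
  then obtain u where u: "\<exists>f\<in>\<phi> ` {..card B}. u f \<noteq> 0"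
    "\<And>x. (\<Sum>f\<in>\<phi> ` {..card B}. u f * f x) = 0"
    using span_set_dependent[OF assms(1), of "\<phi> ` {..card B}"] span by (auto simp: card_image)
  show ?thesis
    using True u by (intro exI[of _ "\<lambda>k. u (\<phi> k)"]) (auto simp: sum.reindex)
next
  case False
  then obtain i j where ij: "i \<le> card B" "j \<le> card B" "i \<noteq> j" "\<phi> i = \<phi> j"
    unfolding inj_on_def by auto
  define c :: "nat \<Rightarrow> complex" where "c = (\<lambda>k. if k = i then 1 else if k = j then -1 else 0)"
  have "(\<Sum>k\<le>card B. c k * \<phi> k x) = (\<Sum>k\<in>{i,j}. c k * \<phi> k x)" for x
    by (rule sum.mono_neutral_right) (use ij in \<open>auto simp: c_def\<close>)
  then show ?thesis using ij by (intro exI[of _ c]) (auto simp: c_def)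
qed

definition translation_eigenvalues :: "('a::real_vector \<Rightarrow> complex) set \<Rightarrow> 'a \<Rightarrow> complex set" where
  "translation_eigenvalues V v = {z. \<exists>w\<in>V. w \<noteq> (\<lambda>x. 0) \<and> (\<forall>x. w (x + v) = z * w x)}"

lemma zero_notin_translation_eigenvalues: "0 \<notin> translation_eigenvalues V v"
proof
  assume "0 \<in> translation_eigenvalues V v"
  then obtain w :: "_ \<Rightarrow> complex" where "w \<noteq> (\<lambda>x. 0)" "\<And>x. w (x + v) = 0"
    unfolding translation_eigenvalues_def by auto
  moreover have "w y = 0" for y
    using \<open>\<And>x. w (x + v) = 0\<close>[of "y - v"] by simp
  ultimately show False by auto
qed

lemma linear_factor_annihilator:
  assumes "u \<in> V" and "poly_translate v [:-c, 1:] u = (\<lambda>x. 0)"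
  shows "u = (\<lambda>x. 0) \<or> c \<in> translation_eigenvalues V v"
  using assms unfolding translation_eigenvalues_def by (auto simp: fun_eq_iff poly_translate_linear)

lemma poly_translate_proots_annihilator:
  assumes "P \<noteq> 0" and "poly_translate v P w = (\<lambda>x. 0)"
  shows "poly_translate v (\<Prod>z\<in>#proots P. [:-z, 1:]) w = (\<lambda>x. 0)"
  using assms complex_poly_decompose_multiset[of P]
  by (metis (no_types, lifting) fun_eq_iff leading_coeff_0_iff mult_eq_0_iff poly_translate_smult)

locale translation_invariant_space =
  fixes V :: "('a::real_normed_vector \<Rightarrow> complex) set"
  assumes cont_subspace: "cont_subspace V"
    and translate_closed: "\<forall>h. \<forall>g\<in>V. translate h g \<in> V"
begin

lemma continuous_on_mem: "g \<in> V \<Longrightarrow> continuous_on UNIV g"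
  using cont_subspace by (simp add: cont_subspace_def)

lemma translate_mem: "g \<in> V \<Longrightarrow> (\<lambda>x. g (x + h)) \<in> V"
  using translate_closed by (simp add: translate_def)

lemma lincomb_mem: "(\<And>k. k \<in> K \<Longrightarrow> F k \<in> V) \<Longrightarrow> (\<lambda>x. \<Sum>k\<in>K. c k * F k x) \<in> V"
proof (induction K rule: infinite_finite_induct)
  case (insert k K)
  then have "(\<lambda>x. c k * F k x) \<in> V" and "(\<lambda>x. \<Sum>k\<in>K. c k * F k x) \<in> V"
    using cont_subspace unfolding cont_subspace_def by blast+
  then show ?case
    using insert.hyps cont_subspace unfolding cont_subspace_def by simp
qed (use cont_subspace in \<open>auto simp: cont_subspace_def\<close>)

lemma poly_translate_mem: "g \<in> V \<Longrightarrow> poly_translate v p g \<in> V"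
  unfolding poly_translate_def by (intro lincomb_mem translate_mem)

lemma forward_diff_power_mem: "g \<in> V \<Longrightarrow> (forward_diff h ^^ n) g \<in> V"
  by (induction n) (simp_all add: forward_diff_eq_poly_translate poly_translate_mem)

lemma linear_factors_annihilator_eigenvalue:
  assumes "w \<in> V" "w \<noteq> (\<lambda>x. 0)" "poly_translate v (\<Prod>z\<in>#R. [:-z, 1:]) w = (\<lambda>x. 0)"
  shows "\<exists>z\<in>#R. z \<in> translation_eigenvalues V v"
  using assms(3)
proof (induction R)
  case empty
  then show ?case using assms(2) by (simp add: poly_translate_1)
next
  case (add a R)
  define u where "u = poly_translate v (\<Prod>z\<in>#R. [:-z, 1:]) w"
  have "poly_translate v [:-a, 1:] u = (\<lambda>x. 0)"
    using add.prems by (simp only: u_def image_mset_add_mset prod_mset.add_mset poly_translate_mult)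
  then have "u = (\<lambda>x. 0) \<or> a \<in> translation_eigenvalues V v"
    by (intro linear_factor_annihilator) (simp add: u_def poly_translate_mem assms(1))
  then show ?case using add.IH by (auto simp: u_def)
qed

lemma linear_factors_annihilator_unipotent:
  assumes "translation_eigenvalues V v \<subseteq> {1}"
    and "w \<in> V" "poly_translate v (\<Prod>z\<in>#R. [:-z, 1:]) w = (\<lambda>x. 0)"
  shows "(forward_diff v ^^ size R) w = (\<lambda>x. 0)"
  using assms(2,3)
proof (induction R arbitrary: w)
  case empty
  then show ?case by (simp add: poly_translate_1)
next
  case (add a R)
  show ?case
  proof (cases "a = 1")
    case True
    have "poly_translate v (\<Prod>z\<in>#R. [:-z, 1:]) (forward_diff v w) = (\<lambda>x. 0)"
      using add.prems(2) True by (simp add: forward_diff_eq_poly_translate mult.commute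
          flip: poly_translate_mult)
    then have "(forward_diff v ^^ size R) (forward_diff v w) = (\<lambda>x. 0)"
      using add.IH add.prems(1) forward_diff_power_mem[where n = 1] by simp
    then show ?thesis by (simp only: size_add_mset funpow_Suc_right o_apply)
  next
    case False
    define u where "u = poly_translate v (\<Prod>z\<in>#R. [:-z, 1:]) w"
    have "poly_translate v [:-a, 1:] u = (\<lambda>x. 0)"
      using add.prems
      by (simp only: u_def image_mset_add_mset prod_mset.add_mset poly_translate_mult)
    then have "u = (\<lambda>x. 0) \<or> a \<in> translation_eigenvalues V v"
      by (intro linear_factor_annihilator) (simp add: u_def poly_translate_mem add.prems(1))
    then have "u = (\<lambda>x. 0)"
      using assms(1) False by auto
    then have "(forward_diff v ^^ size R) w = (\<lambda>x. 0)"
      using add.IH add.prems(1) by (simp add: u_def)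
    then show ?thesis by (rule forward_diff_power_vanishes_above) simp
  qed
qed

lemma annihilator_root_eigenvalue:
  assumes "P \<noteq> 0" "w \<in> V" "w \<noteq> (\<lambda>x. 0)" "poly_translate v P w = (\<lambda>x. 0)"
  shows "\<exists>z. poly P z = 0 \<and> z \<in> translation_eigenvalues V v"
  using linear_factors_annihilator_eigenvalue[OF assms(2,3)
      poly_translate_proots_annihilator[OF assms(1,4)]] assms(1)
  by auto

lemma annihilator_unipotent:
  assumes "translation_eigenvalues V v \<subseteq> {1}" "P \<noteq> 0" "w \<in> V" "poly_translate v P w = (\<lambda>x. 0)"
  shows "(forward_diff v ^^ degree P) w = (\<lambda>x. 0)"
  using linear_factors_annihilator_unipotent[OF assms(1,3)
      poly_translate_proots_annihilator[OF assms(2,4)]]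
  by (simp add: size_proots_complex)

end

locale finite_translation_invariant_space = translation_invariant_space V
  for V :: "('a::real_normed_vector \<Rightarrow> complex) set" +
  fixes B :: "('a \<Rightarrow> complex) set"
  assumes finite_B: "finite B" and B_subset: "B \<subseteq> V"
    and V_eq_span: "V = {(\<lambda>x. \<Sum>b\<in>B. c b * b x) | c. True}"
begin

text \<open>The coefficients of the annihilator come from a linear dependence among the \<open>card B + 1\<close>
  translates \<open>g (x + k v)\<close>, \<open>k \<le> card B\<close>.\<close>

lemma translation_annihilator:
  assumes "g \<in> V"
  shows "\<exists>P. P \<noteq> 0 \<and> degree P \<le> card B \<and> poly_translate v P g = (\<lambda>x. 0)"
proof -
  let ?N = "card B"
  have "\<exists>c. (\<lambda>x. g (x + real k *\<^sub>R v)) = (\<lambda>x. \<Sum>b\<in>B. c b * b x)" for k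
    using translate_mem[OF assms] V_eq_span by blast
  then obtain c where c: "\<exists>k\<le>?N. c k \<noteq> 0" "\<And>x. (\<Sum>k\<le>?N. c k * g (x + real k *\<^sub>R v)) = 0"
    using span_family_dependent[OF finite_B, of "\<lambda>k x. g (x + real k *\<^sub>R v)"] by blast
  define P where "P = (\<Sum>k\<le>?N. monom (c k) k)"
  have coeff_P: "coeff P j = (if j \<le> ?N then c j else 0)" for j
    by (simp add: P_def coeff_sum coeff_monom)
  have deg: "degree P \<le> ?N"
    by (rule degree_le) (simp add: coeff_P)
  moreover have "P \<noteq> 0"
    using c(1) coeff_P by (metis coeff_0)
  moreover have "poly_translate v P g = (\<lambda>x. 0)"
    using c(2) by (simp add: fun_eq_iff poly_translate_eq_sum_atMost[OF deg] coeff_P)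
  ultimately show ?thesis by blast
qed

lemma common_translation_annihilator: "\<exists>P. P \<noteq> 0 \<and> (\<forall>w\<in>V. poly_translate v P w = (\<lambda>x. 0))"
proof -
  have "\<forall>b\<in>B. \<exists>P. P \<noteq> 0 \<and> poly_translate v P b = (\<lambda>x. 0)"
    using translation_annihilator B_subset by blast
  then obtain Q where Q: "\<And>b. b \<in> B \<Longrightarrow> Q b \<noteq> 0 \<and> poly_translate v (Q b) b = (\<lambda>x. 0)"
    by metis
  define P where "P = (\<Prod>b\<in>B. Q b)"
  have "P \<noteq> 0"
    unfolding P_def using Q finite_B by simp
  moreover have "poly_translate v P b = (\<lambda>x. 0)" if "b \<in> B" for b
  proof -
    have "P = (\<Prod>b'\<in>B - {b}. Q b') * Q b"
      unfolding P_def using that finite_B by (simp add: prod.remove mult.commute)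
    then show ?thesis
      using Q[OF that] by (simp add: poly_translate_mult)
  qed
  then have "poly_translate v P w = (\<lambda>x. 0)" if w: "w \<in> V" for w
  proof -
    obtain c where w_eq: "w = (\<lambda>x. \<Sum>b\<in>B. c b * b x)"
      using w V_eq_span by blast
    show ?thesis
      unfolding w_eq using \<open>\<And>b. b \<in> B \<Longrightarrow> poly_translate v P b = (\<lambda>x. 0)\<close>
      by (simp add: fun_eq_iff poly_translate_lincomb)
  qed
  ultimately show ?thesis by blast
qed

lemma finite_translation_eigenvalues: "finite (translation_eigenvalues V v)"
proof -
  obtain P where P: "P \<noteq> 0" "\<And>w. w \<in> V \<Longrightarrow> poly_translate v P w = (\<lambda>x. 0)"
    using common_translation_annihilator by blast
  have "translation_eigenvalues V v \<subseteq> {z. poly P z = 0}"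
  proof
    fix z assume "z \<in> translation_eigenvalues V v"
    then obtain w where w: "w \<in> V" "w \<noteq> (\<lambda>x. 0)" "\<And>x. w (x + v) = z * w x"
      unfolding translation_eigenvalues_def by blast
    then obtain x where "w x \<noteq> 0" by auto
    moreover have "poly_translate v P w x = poly P z * w x"
      by (rule poly_translate_eigenfunction) (rule w(3))
    ultimately show "z \<in> {z. poly P z = 0}" using P(2)[OF w(1)] by simp
  qed
  then show ?thesis using poly_roots_finite[OF P(1)] by (rule finite_subset)
qed

lemma unipotent_translation:
  assumes "translation_eigenvalues V v \<subseteq> {1}" "g \<in> V"
  shows "(forward_diff v ^^ card B) g = (\<lambda>x. 0)"
proof -
  obtain P where "P \<noteq> 0" "degree P \<le> card B" "poly_translate v P g = (\<lambda>x. 0)"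
    using translation_annihilator[OF assms(2)] by blast
  then show ?thesis
    using annihilator_unipotent[OF assms(1)] assms(2) forward_diff_power_vanishes_above by blast
qed

end

section \<open>Hyperbolic rotations in \<open>O(p,q)\<close>\<close>

text \<open>\<open>boost a b r\<close> is the hyperbolic rotation by \<open>r\<close> in the plane spanned by the \<open>a\<close>-th
  positive and the \<open>b\<close>-th negative coordinate; \<open>null_vector a b s\<close> with \<open>s = \<plusminus>1\<close> spans one
  of its two isotropic eigenlines.\<close>

definition boost :: "'p \<Rightarrow> 'q \<Rightarrow> real \<Rightarrow> real ^ ('p::finite + 'q::finite) ^ ('p + 'q)" where
  "boost a b r = (\<chi> i j. if i = j then (if i = Inl a \<or> i = Inr b then cosh r else 1)
      else if (i = Inl a \<and> j = Inr b) \<or> (i = Inr b \<and> j = Inl a) then sinh r else 0)"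

definition null_vector :: "'p \<Rightarrow> 'q \<Rightarrow> real \<Rightarrow> real ^ ('p::finite + 'q::finite)" where
  "null_vector a b s = axis (Inl a) 1 + s *\<^sub>R axis (Inr b) 1"

lemma sum_UNIV_eq_sum_support:
  fixes f :: "'a::finite \<Rightarrow> 'b::comm_monoid_add"
  assumes "\<And>k. k \<notin> T \<Longrightarrow> f k = 0"
  shows "sum f UNIV = sum f T"
  by (rule sum.mono_neutral_right) (use assms in auto)

lemma Ipq_mult_nth:
  "(Ipq ** M) $ i $ j = (case i of Inl _ \<Rightarrow> 1 | Inr _ \<Rightarrow> -1) * M $ i $ j"
proof -
  have "(Ipq ** M) $ i $ j = (\<Sum>k\<in>UNIV. Ipq $ i $ k * M $ k $ j)"
    by (simp add: matrix_matrix_mult_def)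
  also have "\<dots> = (\<Sum>k\<in>{i}. Ipq $ i $ k * M $ k $ j)"
    by (rule sum_UNIV_eq_sum_support) (simp add: Ipq_def)
  finally show ?thesis by (simp add: Ipq_def)
qed

lemma indef_orth_groupI:
  assumes "transpose A ** Ipq ** A = Ipq"
  shows "A \<in> indef_orth_group"
proof -
  have "Ipq ** Ipq = (mat 1 :: real ^ ('p::finite + 'q::finite) ^ ('p + 'q))"
    by (simp add: vec_eq_iff Ipq_mult_nth) (auto simp: Ipq_def mat_def split: sum.splits)
  then have "(Ipq ** transpose A ** Ipq) ** A = mat 1"
    using assms by (metis matrix_mul_assoc)
  then show ?thesis
    using assms invertible_left_inverse unfolding indef_orth_group_def by blast
qed

lemma boost_in_indef_orth_group: "boost a b r \<in> indef_orth_group"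
proof (rule indef_orth_groupI)
  let ?A = "boost a b r"
  have "(transpose ?A ** (Ipq ** ?A)) $ i $ j = Ipq $ i $ j" for i j
  proof -
    have "(transpose ?A ** (Ipq ** ?A)) $ i $ j =
        (\<Sum>k\<in>UNIV. ?A $ k $ i * ((case k of Inl _ \<Rightarrow> 1 | Inr _ \<Rightarrow> -1) * ?A $ k $ j))"
      by (subst matrix_matrix_mult_def) (simp add: transpose_def Ipq_mult_nth)
    also have "\<dots> =
        (\<Sum>k\<in>{Inl a, Inr b, i}. ?A $ k $ i * ((case k of Inl _ \<Rightarrow> 1 | Inr _ \<Rightarrow> -1) * ?A $ k $ j))"
      by (rule sum_UNIV_eq_sum_support) (auto simp: boost_def)
    also have "\<dots> = Ipq $ i $ j"
    proof (cases "i = Inl a \<or> i = Inr b")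
      case True
      then have "{Inl a, Inr b, i} = {Inl a, Inr b}" by auto
      then show ?thesis
        using True hyperbolic_pythagoras[of r]
        by (cases "j = Inl a"; cases "j = Inr b")
           (auto simp: boost_def Ipq_def power2_eq_square algebra_simps split: sum.splits)
    next
      case False
      then show ?thesis
        by (cases "j = Inl a"; cases "j = Inr b"; cases "i = j")
           (auto simp: boost_def Ipq_def split: sum.splits)
    qed
    finally show ?thesis .
  qed
  then show "transpose ?A ** Ipq ** ?A = Ipq"
    by (simp add: vec_eq_iff matrix_mul_assoc)
qed

lemma boost_null_vector:
  assumes "s = 1 \<or> s = -1"
  shows "boost a b r *v null_vector a b s = exp (s * r) *\<^sub>R null_vector a b s"
proof -
  have "(boost a b r *v null_vector a b s) $ i = (exp (s * r) *\<^sub>R null_vector a b s) $ i" for i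
  proof -
    have "(boost a b r *v null_vector a b s) $ i =
        (\<Sum>j\<in>UNIV. boost a b r $ i $ j * null_vector a b s $ j)"
      by (simp add: matrix_vector_mult_def)
    also have "\<dots> = (\<Sum>j\<in>{Inl a, Inr b}. boost a b r $ i $ j * null_vector a b s $ j)"
      by (rule sum_UNIV_eq_sum_support) (auto simp: null_vector_def axis_def)
    also have "\<dots> = (exp (s * r) *\<^sub>R null_vector a b s) $ i"
      using assms
      by (cases "i = Inl a"; cases "i = Inr b")
         (auto simp: boost_def null_vector_def axis_def cosh_def sinh_def field_simps)
    finally show ?thesis .
  qed
  then show ?thesis by (simp add: vec_eq_iff)
qed

lemma axis_as_null_vectors:
  "\<exists>a b \<sigma>. axis i (1::real) = (1/2) *\<^sub>R null_vector a b 1 + \<sigma> *\<^sub>R null_vector a b (-1)"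
proof (cases i)
  case (Inl a)
  then show ?thesis
    by (intro exI[of _ a] exI[of _ undefined] exI[of _ "1/2"])
       (auto simp: vec_eq_iff null_vector_def axis_def)
next
  case (Inr b)
  then show ?thesis
    by (intro exI[of _ undefined] exI[of _ b] exI[of _ "-1/2"])
       (auto simp: vec_eq_iff null_vector_def axis_def)
qed

section \<open>Polynomial functions of several variables\<close>

definition monomial_fun :: "('n \<Rightarrow> nat) \<Rightarrow> real ^ 'n::finite \<Rightarrow> complex" where
  "monomial_fun \<alpha> x = (\<Prod>i\<in>UNIV. complex_of_real ((x $ i) ^ \<alpha> i))"

lemma monomial_fun_add: "monomial_fun (\<lambda>i. \<alpha> i + \<beta> i) x = monomial_fun \<alpha> x * monomial_fun \<beta> x"
  by (simp add: monomial_fun_def power_add prod.distrib)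

lemma monomial_fun_coordinate: "monomial_fun ((\<lambda>_. 0)(j := k)) x = complex_of_real (x $ j) ^ k"
  by (simp add: monomial_fun_def prod.remove[of UNIV j])

lemma is_polynomial_fun_iff:
  "is_polynomial_fun f \<longleftrightarrow> (\<exists>E c. finite E \<and> (\<forall>x. f x = (\<Sum>\<alpha>\<in>E. c \<alpha> * monomial_fun \<alpha> x)))"
  by (simp add: is_polynomial_fun_def monomial_fun_def)

text \<open>Unlike the definition, the exponents \<open>\<alpha> i\<close> may repeat here.\<close>

lemma is_polynomial_funI:
  assumes "finite I" "\<And>x. f x = (\<Sum>i\<in>I. c i * monomial_fun (\<alpha> i) x)"
  shows "is_polynomial_fun f"
  unfolding is_polynomial_fun_iff
proof (intro exI conjI allI)
  show "finite (\<alpha> ` I)" using assms(1) by blast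
  fix x
  have "f x = (\<Sum>\<beta>\<in>\<alpha> ` I. \<Sum>i | i \<in> I \<and> \<alpha> i = \<beta>. c i * monomial_fun (\<alpha> i) x)"
    unfolding assms(2) by (rule sum.image_gen[OF assms(1)])
  also have "\<dots> = (\<Sum>\<beta>\<in>\<alpha> ` I. (\<Sum>i | i \<in> I \<and> \<alpha> i = \<beta>. c i) * monomial_fun \<beta> x)"
    by (intro sum.cong refl) (simp add: sum_distrib_right)
  finally show "f x = \<dots>" .
qed

lemma is_polynomial_fun_const: "is_polynomial_fun (\<lambda>x. c)"
  by (rule is_polynomial_funI[where I = "{()}" and c = "\<lambda>_. c" and \<alpha> = "\<lambda>_. \<lambda>_. 0"])
     (simp_all add: monomial_fun_def)

lemma is_polynomial_fun_add:
  assumes "is_polynomial_fun f" "is_polynomial_fun g"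
  shows "is_polynomial_fun (\<lambda>x. f x + g x)"
proof -
  obtain E1 c1 where "finite E1" "\<And>x. f x = (\<Sum>\<alpha>\<in>E1. c1 \<alpha> * monomial_fun \<alpha> x)"
    using assms(1) unfolding is_polynomial_fun_iff by blast
  moreover obtain E2 c2 where "finite E2" "\<And>x. g x = (\<Sum>\<alpha>\<in>E2. c2 \<alpha> * monomial_fun \<alpha> x)"
    using assms(2) unfolding is_polynomial_fun_iff by blast
  ultimately show ?thesis
    by (intro is_polynomial_funI[where I = "E1 <+> E2" and c = "case_sum c1 c2"
          and \<alpha> = "case_sum id id"])
       (simp_all add: sum.Plus o_def)
qed

lemma is_polynomial_fun_sum:
  "(\<And>k. k \<in> K \<Longrightarrow> is_polynomial_fun (F k)) \<Longrightarrow> is_polynomial_fun (\<lambda>x. \<Sum>k\<in>K. F k x)"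
  by (induction K rule: infinite_finite_induct)
     (simp_all add: is_polynomial_fun_const is_polynomial_fun_add)

lemma is_polynomial_fun_mult:
  assumes "is_polynomial_fun f" "is_polynomial_fun g"
  shows "is_polynomial_fun (\<lambda>x. f x * g x)"
proof -
  obtain E1 c1 where "finite E1" "\<And>x. f x = (\<Sum>\<alpha>\<in>E1. c1 \<alpha> * monomial_fun \<alpha> x)"
    using assms(1) unfolding is_polynomial_fun_iff by blast
  moreover obtain E2 c2 where "finite E2" "\<And>x. g x = (\<Sum>\<alpha>\<in>E2. c2 \<alpha> * monomial_fun \<alpha> x)"
    using assms(2) unfolding is_polynomial_fun_iff by blast
  ultimately show ?thesis
    by (intro is_polynomial_funI[where I = "E1 \<times> E2" and c = "\<lambda>(\<alpha>, \<beta>). c1 \<alpha> * c2 \<beta>"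
          and \<alpha> = "\<lambda>(\<alpha>, \<beta>) i. \<alpha> i + \<beta> i"])
       (simp_all add: sum_product sum.cartesian_product monomial_fun_add mult_ac split_def)
qed

lemma is_polynomial_fun_univariate_coordinate:
  assumes "is_univariate_poly P"
  shows "is_polynomial_fun (\<lambda>x. P (x $ j))"
proof -
  obtain p where "\<And>t. P t = poly p (of_real t)"
    using assms unfolding is_univariate_poly_def by blast
  then show ?thesis
    by (intro is_polynomial_funI[where I = "{..degree p}" and c = "coeff p"
          and \<alpha> = "\<lambda>k. (\<lambda>_. 0)(j := k)"])
       (simp_all add: poly_altdef monomial_fun_coordinate)
qed

section \<open>Spaces invariant under translations and \<open>O(p,q)\<close>\<close>

lemma finite_root_closed_torsion:
  fixes F :: "'a::idom set"
  assumes "finite F" "0 \<notin> F" "\<And>z m. z \<in> F \<Longrightarrow> m \<ge> 1 \<Longrightarrow> \<exists>y\<in>F. y ^ m = z" "z \<in> F"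
  shows "\<exists>r\<ge>1. z ^ r = 1"
proof -
  obtain y where y: "\<And>m. m \<ge> 1 \<Longrightarrow> y m \<in> F \<and> y m ^ m = z"
    using assms(3,4) by metis
  have "\<not> inj_on y {1..card F + 1}"
  proof
    assume "inj_on y {1..card F + 1}"
    moreover have "y ` {1..card F + 1} \<subseteq> F" using y by auto
    ultimately show False
      using card_inj_on_le[OF _ _ assms(1), of y "{1..card F + 1}"] by simp
  qed
  then obtain m1 m2 where m: "m1 \<in> {1..card F + 1}" "m2 \<in> {1..card F + 1}" "m1 \<noteq> m2" "y m1 = y m2"
    unfolding inj_on_def by blast
  obtain a b where ab: "1 \<le> a" "a < b" "y a = y b"
  proof (cases m1 m2 rule: linorder_cases)
    case less
    then show ?thesis using m that[of m1 m2] by simp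
  next
    case greater
    then show ?thesis using m that[of m2 m1] by simp
  qed (use m in simp)
  define u where "u = y a"
  have "u ^ a = z" "u ^ b = z" "u \<noteq> 0"
    using y[of a] y[of b] ab assms(2) by (auto simp: u_def)
  moreover have "u ^ b = u ^ a * u ^ (b - a)"
    using ab by (simp flip: power_add)
  ultimately have "u ^ (b - a) = 1"
    by (metis mult_cancel_left1 power_eq_0_iff)
  then have "z ^ (b - a) = 1"
    using \<open>u ^ a = z\<close> by (metis power_mult power_mult_distrib power_one mult.commute)
  then show ?thesis using ab by (intro exI[of _ "b - a"]) auto
qed

text \<open>If every element of \<open>F\<close> has finite order, a common multiple \<open>L\<close> of the orders kills
  all of \<open>F\<close>; an \<open>L\<close>-th root of \<open>z\<close> inside \<open>F\<close> then shows \<open>z = 1\<close>.\<close>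

lemma finite_root_closed_eq_1:
  fixes F :: "'a::idom set"
  assumes "finite F" "0 \<notin> F" "\<And>z m. z \<in> F \<Longrightarrow> m \<ge> 1 \<Longrightarrow> \<exists>y\<in>F. y ^ m = z" "z \<in> F"
  shows "z = 1"
proof -
  obtain r where r: "\<And>z. z \<in> F \<Longrightarrow> r z \<ge> 1 \<and> z ^ r z = 1"
    using finite_root_closed_torsion[OF assms(1-3)] by metis
  define L where "L = (\<Prod>z\<in>F. r z)"
  have "L \<ge> 1"
    unfolding L_def using r by (metis One_nat_def Suc_le_eq prod_pos)
  then obtain y where y: "y \<in> F" "y ^ L = z"
    using assms(3,4) by blast
  have "r y dvd L"
    unfolding L_def using assms(1) y(1) by (rule dvd_prodI)
  then have "y ^ L = 1"
    using r[OF y(1)] by (metis dvdE power_mult power_one)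
  then show ?thesis using y by simp
qed

locale indef_orth_invariant_space = finite_translation_invariant_space V B
  for V :: "(real ^ ('p::finite + 'q::finite) \<Rightarrow> complex) set" and B +
  assumes orth_closed: "\<forall>A\<in>indef_orth_group. \<forall>g\<in>V. compose_lin A g \<in> V"
begin

lemma translation_eigenvalues_orth_subset:
  assumes "A \<in> indef_orth_group"
  shows "translation_eigenvalues V (A *v v) \<subseteq> translation_eigenvalues V v"
proof
  fix z assume "z \<in> translation_eigenvalues V (A *v v)"
  then obtain w where w: "w \<in> V" "w \<noteq> (\<lambda>x. 0)" "\<And>x. w (x + A *v v) = z * w x"
    unfolding translation_eigenvalues_def by blast
  obtain A' where "A ** A' = mat 1"
    using assms unfolding indef_orth_group_def invertible_def by blast
  then have "w y = compose_lin A w (A' *v y)" for y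
    by (simp add: compose_lin_def matrix_vector_mul_assoc)
  then have "compose_lin A w \<noteq> (\<lambda>x. 0)"
    using w(2) by auto
  moreover have "compose_lin A w \<in> V"
    using orth_closed assms w(1) by blast
  moreover have "compose_lin A w (x + v) = z * compose_lin A w x" for x
    using w(3) by (simp add: compose_lin_def matrix_vector_right_distrib)
  ultimately show "z \<in> translation_eigenvalues V v"
    unfolding translation_eigenvalues_def by blast
qed

lemma translation_eigenvalues_null_scale:
  assumes "s = 1 \<or> s = -1" and "c > 0"
  shows "translation_eigenvalues V (t *\<^sub>R null_vector a b s)
    \<subseteq> translation_eigenvalues V (c *\<^sub>R t *\<^sub>R null_vector a b s)"
proof -
  define r where "r = - s * ln c"
  have "exp (s * r) = inverse c"
    using assms by (auto simp: r_def exp_minus)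
  then have "boost a b r *v (c *\<^sub>R t *\<^sub>R null_vector a b s) = t *\<^sub>R null_vector a b s"
    using assms(2) by (simp add: matrix_vector_mult_scaleR boost_null_vector[OF assms(1)])
  then show ?thesis
    using translation_eigenvalues_orth_subset[OF boost_in_indef_orth_group] by metis
qed

lemma null_translation_eigenvalues:
  assumes s: "s = 1 \<or> s = -1"
  shows "translation_eigenvalues V (t *\<^sub>R null_vector a b s) \<subseteq> {1}"
proof
  let ?v = "t *\<^sub>R null_vector a b s"
  have roots: "\<exists>y\<in>translation_eigenvalues V ?v. y ^ m = z"
    if z: "z \<in> translation_eigenvalues V ?v" and m: "m \<ge> 1" for z m
  proof -
    define u where "u = (t / real m) *\<^sub>R null_vector a b s"
    have mu: "real m *\<^sub>R u = ?v" using m by (simp add: u_def)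
    obtain w where w: "w \<in> V" "w \<noteq> (\<lambda>x. 0)" "\<And>x. w (x + ?v) = z * w x"
      using z unfolding translation_eigenvalues_def by blast
    define P where "P = [:0, 1:] ^ m + [:-z:]"
    have "coeff P m = 1"
      using m by (cases m) (simp_all add: P_def coeff_linear_power)
    then have "P \<noteq> 0" by auto
    moreover have "poly_translate u P w = (\<lambda>x. 0)"
      using w(3) by (simp add: fun_eq_iff P_def poly_translate_add poly_translate_X_power mu
          poly_translate_const)
    ultimately obtain y where "poly P y = 0" "y \<in> translation_eigenvalues V u"
      using annihilator_root_eigenvalue w(1,2) by blast
    moreover have "translation_eigenvalues V u \<subseteq> translation_eigenvalues V ?v"
      using translation_eigenvalues_null_scale[OF s, of "real m" "t / real m"] m
      by (simp add: u_def)
    ultimately show ?thesis by (auto simp: P_def)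
  qed
  fix z assume "z \<in> translation_eigenvalues V ?v"
  then show "z \<in> {1}"
    using finite_root_closed_eq_1[OF finite_translation_eigenvalues
        zero_notin_translation_eigenvalues roots]
    by blast
qed

lemma null_line_newton_interpolant:
  assumes "s = 1 \<or> s = -1" and "g \<in> V"
  shows "g (x + t *\<^sub>R null_vector a b s) = newton_interpolant (card B) (null_vector a b s) g x t"
  using assms continuous_on_mem null_translation_eigenvalues unipotent_translation
  by (intro newton_interpolant_real) auto

lemma axis_expansion:
  assumes "g \<in> V"
  shows "\<exists>(K :: (nat \<times> nat) set) (P :: nat \<times> nat \<Rightarrow> real \<Rightarrow> complex) w. finite K \<and>
    (\<forall>\<kappa>\<in>K. is_univariate_poly (P \<kappa>) \<and> w \<kappa> \<in> V) \<and>
    (\<forall>x t. g (x + t *\<^sub>R axis i 1) = (\<Sum>\<kappa>\<in>K. P \<kappa> t * w \<kappa> x))"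
proof -
  obtain a b \<sigma> where axis: "axis i 1 = (1/2) *\<^sub>R null_vector a b 1 + \<sigma> *\<^sub>R null_vector a b (-1)"
    using axis_as_null_vectors by blast
  define K where "K = {..<card B} \<times> {..<card B}"
  define P :: "nat \<times> nat \<Rightarrow> real \<Rightarrow> complex"
    where "P = (\<lambda>\<kappa> t. of_real (((1/2) * t) gchoose fst \<kappa>) * of_real ((\<sigma> * t) gchoose snd \<kappa>))"
  define w where "w = (\<lambda>\<kappa>. (forward_diff (null_vector a b (-1)) ^^ snd \<kappa>)
      ((forward_diff (null_vector a b 1) ^^ fst \<kappa>) g))"
  have "g (x + t *\<^sub>R axis i 1) = (\<Sum>\<kappa>\<in>K. P \<kappa> t * w \<kappa> x)" for x t
  proof -
    have "g (x + t *\<^sub>R axis i 1) =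
        g ((x + (\<sigma> * t) *\<^sub>R null_vector a b (-1)) + ((1/2) * t) *\<^sub>R null_vector a b 1)"
      by (simp add: axis algebra_simps)
    also have "\<dots> = (\<Sum>j<card B. of_real (((1/2) * t) gchoose j) *
        (forward_diff (null_vector a b 1) ^^ j) g (x + (\<sigma> * t) *\<^sub>R null_vector a b (-1)))"
      using null_line_newton_interpolant[of 1, OF _ assms] by (simp add: newton_interpolant_def)
    also have "\<dots> = (\<Sum>j<card B. of_real (((1/2) * t) gchoose j) *
        (\<Sum>l<card B. of_real ((\<sigma> * t) gchoose l) * w (j, l) x))"
      using null_line_newton_interpolant[of "-1", OF _ forward_diff_power_mem[OF assms]]
      by (simp add: newton_interpolant_def w_def)
    also have "\<dots> = (\<Sum>\<kappa>\<in>K. P \<kappa> t * w \<kappa> x)"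
      by (simp add: K_def P_def sum.cartesian_product sum_distrib_left split_def mult_ac)
    finally show ?thesis .
  qed
  moreover have "is_univariate_poly (\<lambda>t. of_real ((c * t) gchoose k))" for c k
    using is_univariate_poly_affine[OF is_univariate_poly_gchoose, of c 0] by simp
  then have "is_univariate_poly (P \<kappa>) \<and> w \<kappa> \<in> V" for \<kappa>
    unfolding P_def w_def using assms
    by (intro conjI is_univariate_poly_mult forward_diff_power_mem)
  ultimately show ?thesis
    by (intro exI[of _ K] exI[of _ P] exI[of _ w]) (simp add: K_def)
qed

lemma is_polynomial_fun_on_coordinate_subspace:
  assumes "finite S" and "g \<in> V"
  shows "is_polynomial_fun (\<lambda>x. g (\<chi> i. if i \<in> S then x $ i else 0))"
  using assms
proof (induction S arbitrary: g rule: finite_induct)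
  case empty
  then show ?case by (simp add: is_polynomial_fun_const)
next
  case (insert j S)
  obtain K :: "(nat \<times> nat) set" and P :: "nat \<times> nat \<Rightarrow> real \<Rightarrow> complex" and w
    where K: "finite K" "\<And>\<kappa>. \<kappa> \<in> K \<Longrightarrow> is_univariate_poly (P \<kappa>) \<and> w \<kappa> \<in> V"
    and expand: "\<And>x t. g (x + t *\<^sub>R axis j 1) = (\<Sum>\<kappa>\<in>K. P \<kappa> t * w \<kappa> x)"
    using axis_expansion[OF insert.prems(1), of j] by blast
  have "(\<chi> i. if i \<in> insert j S then x $ i else 0) =
      (\<chi> i. if i \<in> S then x $ i else 0) + (x $ j) *\<^sub>R axis j 1" for x
    using insert.hyps(2) by (auto simp: vec_eq_iff axis_def)
  then have "(\<lambda>x. g (\<chi> i. if i \<in> insert j S then x $ i else 0)) =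
      (\<lambda>x. \<Sum>\<kappa>\<in>K. P \<kappa> (x $ j) * w \<kappa> (\<chi> i. if i \<in> S then x $ i else 0))"
    by (simp add: expand)
  moreover have "is_polynomial_fun (\<lambda>x. \<Sum>\<kappa>\<in>K. P \<kappa> (x $ j) * w \<kappa> (\<chi> i. if i \<in> S then x $ i else 0))"
    using K(2) insert.IH
    by (intro is_polynomial_fun_sum is_polynomial_fun_mult
        is_polynomial_fun_univariate_coordinate) auto
  ultimately show ?case by simp
qed

lemma is_polynomial_fun_mem: "g \<in> V \<Longrightarrow> is_polynomial_fun g"
  using is_polynomial_fun_on_coordinate_subspace[of UNIV g] by simp

end

theorem mainTheorem12:
  fixes V :: "(real ^ ('p::finite + 'q::finite) \<Rightarrow> complex) set"
    and f :: "real ^ ('p + 'q) \<Rightarrow> complex"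
  assumes "cont_subspace V"
    and "fin_dim_fun V"
    and "\<forall>h. \<forall>g\<in>V. translate h g \<in> V"
    and "\<forall>A\<in>indef_orth_group. \<forall>g\<in>V. compose_lin A g \<in> V"
    and "f \<in> V"
  shows "is_polynomial_fun f"
proof -
  obtain B where "finite B" "B \<subseteq> V" "V = {(\<lambda>x. \<Sum>b\<in>B. c b * b x) | c. True}"
    using assms(2) unfolding fin_dim_fun_def by blast
  then interpret indef_orth_invariant_space V B
    using assms(1,3,4) by unfold_locales
  show ?thesis by (rule is_polynomial_fun_mem[OF assms(5)])
qed

end
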